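(* Let $g(t)$, $t\in[0,T)$, be the maximal Ricci flow solution on $S^1\times S^3$ of the form $g(t)=\phi^2dz^2+a^2\omega^1\otimes\omega^1+b^2\omega^2\otimes\omega^2+c^2\omega^3\otimes\omega^3$ starting from initial data with $0<a\le b\le c$, and let $\check a(t)=\min_{s}a(s,t)$. If there exists $T<\infty$ such that $\check a(T)=0$, then $\check a(t)^2\le 4(T-t)$.
   Context: $S^3=SU(2)$ carries a global left-invariant frame $E_1,E_2,E_3$ with $[E_i,E_j]=-2\epsilon_{ijk}E_k$ and dual coframe $\omega^i$; $z\in S^1=[0,2\pi)$, $\phi,a,b,c$ positive smooth $2\pi$-periodic functions of $z$ (and $t$); $s$ is the arclength coordinate $ds=\phi\,dz$. The Ricci flow $\partial_tg=-2\mathrm{Ric}(g)$ preserves this form. $\check a(T)$ denotes the limiting value of $\check a(t)$ as $t\to T$. *)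

theory Defs
  imports "HOL-Analysis.Analysis"
begin

fun Ck_on :: "nat \<Rightarrow> (real \<times> real) set \<Rightarrow> (real \<times> real \<Rightarrow> real) \<Rightarrow> bool" where
  "Ck_on 0 U F = continuous_on U F"
| "Ck_on (Suc n) U F =
     (continuous_on U F \<and>
      (\<exists>Fz Ft. (\<forall>p\<in>U. ((\<lambda>x. F (x, snd p)) has_real_derivative Fz p) (at (fst p)))
             \<and> (\<forall>p\<in>U. ((\<lambda>y. F (fst p, y)) has_real_derivative Ft p) (at (snd p)))
             \<and> Ck_on n U Fz \<and> Ck_on n U Ft))"

definition smooth_on2 :: "(real \<times> real) set \<Rightarrow> (real \<times> real \<Rightarrow> real) \<Rightarrow> bool" where
  "smooth_on2 U F \<longleftrightarrow> (\<forall>n. Ck_on n U F)"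

text \<open>f(z,t) is smooth on S^1 \<times> [0,T) (z \<in> \<real>, 2\<pi>-periodic): it agrees there with a function
  that is smooth on an open neighbourhood of \<real> \<times> [0,T).\<close>
definition smooth_upto :: "real \<Rightarrow> (real \<Rightarrow> real \<Rightarrow> real) \<Rightarrow> bool" where
  "smooth_upto T f \<longleftrightarrow>
     (\<exists>U G. open U \<and> UNIV \<times> {0..<T} \<subseteq> U \<and> smooth_on2 U G \<and>
            (\<forall>z t. 0 \<le> t \<longrightarrow> t < T \<longrightarrow> G (z, t) = f z t))"

text \<open>Arclength derivative d/ds = (1/\<phi>) d/dz, at fixed time.\<close>
definition sder :: "(real \<Rightarrow> real \<Rightarrow> real) \<Rightarrow> (real \<Rightarrow> real \<Rightarrow> real) \<Rightarrow> real \<Rightarrow> real \<Rightarrow> real" where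
  "sder \<phi> f = (\<lambda>z t. deriv (\<lambda>w. f w t) z / \<phi> z t)"

definition tder :: "(real \<Rightarrow> real \<Rightarrow> real) \<Rightarrow> real \<Rightarrow> real \<Rightarrow> real" where
  "tder f = (\<lambda>z t. deriv (\<lambda>\<tau>. f z \<tau>) t)"

text \<open>Ricci flow  \<partial>_t g = -2 Ric(g)  for
  g = \<phi>^2 dz^2 + a^2 \<omega>1\<otimes>\<omega>1 + b^2 \<omega>2\<otimes>\<omega>2 + c^2 \<omega>3\<otimes>\<omega>3  on S^1 \<times> S^3,
  with [E_i,E_j] = -2 \<epsilon>_ijk E_k, written out as the equivalent PDE system for \<phi>, a, b, c:
   Ric(\<partial>_s,\<partial>_s) = -(a_ss/a + b_ss/b + c_ss/c),
   Ric(e_1,e_1) = -a_ss/a - (a_s/a)(b_s/b + c_s/c) + 2(a^4 - (b^2-c^2)^2)/(a^2 b^2 c^2)  (and cyclically),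
   mixed components vanish.\<close>
definition ricci_flow_eqs ::
  "real \<Rightarrow> (real \<Rightarrow> real \<Rightarrow> real) \<Rightarrow> (real \<Rightarrow> real \<Rightarrow> real) \<Rightarrow> (real \<Rightarrow> real \<Rightarrow> real)
     \<Rightarrow> (real \<Rightarrow> real \<Rightarrow> real) \<Rightarrow> bool" where
  "ricci_flow_eqs T \<phi> a b c \<longleftrightarrow>
    (\<forall>z. \<forall>t\<in>{0<..<T}.
       tder \<phi> z t = \<phi> z t * (sder \<phi> (sder \<phi> a) z t / a z t + sder \<phi> (sder \<phi> b) z t / b z t
                                + sder \<phi> (sder \<phi> c) z t / c z t)
     \<and> tder a z t = sder \<phi> (sder \<phi> a) z t
          + sder \<phi> a z t * (sder \<phi> b z t / b z t + sder \<phi> c z t / c z t)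
          + 2 * ((b z t ^ 2 - c z t ^ 2) ^ 2 - a z t ^ 4) / (a z t * b z t ^ 2 * c z t ^ 2)
     \<and> tder b z t = sder \<phi> (sder \<phi> b) z t
          + sder \<phi> b z t * (sder \<phi> c z t / c z t + sder \<phi> a z t / a z t)
          + 2 * ((c z t ^ 2 - a z t ^ 2) ^ 2 - b z t ^ 4) / (b z t * c z t ^ 2 * a z t ^ 2)
     \<and> tder c z t = sder \<phi> (sder \<phi> c) z t
          + sder \<phi> c z t * (sder \<phi> a z t / a z t + sder \<phi> b z t / b z t)
          + 2 * ((a z t ^ 2 - b z t ^ 2) ^ 2 - c z t ^ 4) / (c z t * a z t ^ 2 * b z t ^ 2))"

definition RF_S1S3 ::
  "real \<Rightarrow> (real \<Rightarrow> real \<Rightarrow> real) \<Rightarrow> (real \<Rightarrow> real \<Rightarrow> real) \<Rightarrow> (real \<Rightarrow> real \<Rightarrow> real)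
     \<Rightarrow> (real \<Rightarrow> real \<Rightarrow> real) \<Rightarrow> bool" where
  "RF_S1S3 T \<phi> a b c \<longleftrightarrow>
    0 < T \<and>
    (\<forall>f\<in>{\<phi>, a, b, c}. smooth_upto T f \<and>
        (\<forall>z t. 0 \<le> t \<longrightarrow> t < T \<longrightarrow> 0 < f z t \<and> f (z + 2 * pi) t = f z t)) \<and>
    ricci_flow_eqs T \<phi> a b c"

definition maximal_RF_S1S3 ::
  "real \<Rightarrow> (real \<Rightarrow> real \<Rightarrow> real) \<Rightarrow> (real \<Rightarrow> real \<Rightarrow> real) \<Rightarrow> (real \<Rightarrow> real \<Rightarrow> real)
     \<Rightarrow> (real \<Rightarrow> real \<Rightarrow> real) \<Rightarrow> bool" where
  "maximal_RF_S1S3 T \<phi> a b c \<longleftrightarrow>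
    RF_S1S3 T \<phi> a b c \<and>
    \<not> (\<exists>T' \<phi>' a' b' c'. T < T' \<and> RF_S1S3 T' \<phi>' a' b' c' \<and>
         (\<forall>z t. 0 \<le> t \<longrightarrow> t < T \<longrightarrow>
            \<phi>' z t = \<phi> z t \<and> a' z t = a z t \<and> b' z t = b z t \<and> c' z t = c z t))"

end

theory Submission
  imports Defs
begin

(* The argument is a pair of minimum principles on the slab [0, 2pi] x [t0, s], each made strict
   by adding eps * exp (2 L (t - t0)) and examining the first time the perturbed function vanishes,
   where it attains its spatial minimum.

   First, a <= b <= c persists: at a spatial minimum of y - x, for (x, y) = (a, b) or (b, c), one
   has x_s = y_s and x_ss <= y_ss, and the evolution equations give (y - x)_t >= (y - x) K with K
   continuous, hence bounded by some L on the slab.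

   Second, at a spatial minimum of a one has a_s = 0 and a_ss >= 0, and since a <= b <= c the
   reaction term of the a-equation is at least -2/a, so (a^2)_t >= -4 there.  Hence
   a^2 - m^2 + 4 (t - t0) with m = min a(., t0) stays nonnegative, that is
   (min a(., s))^2 >= (min a(., t0))^2 - 4 (s - t0); letting s -> T, where min a -> 0, gives
   (min a(., t0))^2 <= 4 (T - t0). *)

lemma periodic_shift_int:
  fixes g :: "real \<Rightarrow> real"
  assumes "\<And>z. g (z + p) = g z"
  shows "g (z + of_int n * p) = g z"
proof (induction n rule: int_induct[where k = 0])
  case base
  show ?case by simp
next
  case (step1 i)
  have "g (z + of_int (i + 1) * p) = g ((z + of_int i * p) + p)"
    by (simp add: algebra_simps)
  with step1 assms show ?case by simp
next
  case (step2 i)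
  have "g (z + of_int i * p) = g ((z + of_int (i - 1) * p) + p)"
    by (simp add: algebra_simps)
  with step2 assms show ?case by simp
qed

lemma periodic_value_in_period:
  fixes g :: "real \<Rightarrow> real"
  assumes "0 < p" "\<And>z. g (z + p) = g z"
  obtains z' where "z' \<in> {0..p}" "g z' = g z"
proof
  let ?n = "\<lfloor>z / p\<rfloor>"
  show "z + of_int (- ?n) * p \<in> {0..p}"
    using floor_divide_lower[OF assms(1), of z] floor_divide_upper[OF assms(1), of z]
    by (simp add: algebra_simps)
  show "g (z + of_int (- ?n) * p) = g z"
    by (rule periodic_shift_int[of g p, OF assms(2)])
qed

lemma periodic_first_nonpos_time:
  fixes v :: "real \<Rightarrow> real \<Rightarrow> real"
  assumes "0 < p"
    and cont: "continuous_on ({0..p} \<times> {ta..tb}) (\<lambda>q. v (fst q) (snd q))"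
    and per: "\<And>z t. ta \<le> t \<Longrightarrow> t \<le> tb \<Longrightarrow> v (z + p) t = v z t"
    and nonpos: "v z1 s1 \<le> 0" "ta \<le> s1" "s1 \<le> tb"
  obtains zs ts where "zs \<in> {0..p}" "ta \<le> ts" "ts \<le> tb" "v zs ts \<le> 0"
    "\<And>z \<tau>. ta \<le> \<tau> \<Longrightarrow> \<tau> < ts \<Longrightarrow> 0 < v z \<tau>"
proof -
  define S where "S = {q \<in> {0..p} \<times> {ta..tb}. v (fst q) (snd q) \<le> 0}"
  have in_S: "\<exists>z'. (z', t) \<in> S" if t: "ta \<le> t" "t \<le> tb" and "v z t \<le> 0" for z t
  proof -
    obtain z' where "z' \<in> {0..p}" "v z' t = v z t"
      using periodic_value_in_period[of p "\<lambda>z. v z t"] assms(1) per[OF t] by blast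
    with that show ?thesis unfolding S_def by auto
  qed
  have "bounded S"
    unfolding S_def by (rule bounded_subset[of "{0..p} \<times> {ta..tb}"]) (auto intro: bounded_Times)
  moreover have "closed S"
    unfolding S_def
    by (intro continuous_on_closed_Collect_le cont continuous_on_const closed_Times closed_atLeastAtMost)
  ultimately have "compact S" by (simp add: compact_eq_bounded_closed)
  moreover have "S \<noteq> {}" using in_S[OF nonpos(2,3,1)] by blast
  ultimately obtain q where "q \<in> S" and first: "\<And>q'. q' \<in> S \<Longrightarrow> snd q \<le> snd q'"
    using continuous_attains_inf[OF _ _ continuous_on_snd[OF continuous_on_id]] by metis
  show thesis
  proof
    show "fst q \<in> {0..p}" "ta \<le> snd q" "snd q \<le> tb" "v (fst q) (snd q) \<le> 0"
      using \<open>q \<in> S\<close> unfolding S_def by auto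
    show "0 < v z \<tau>" if "ta \<le> \<tau>" "\<tau> < snd q" for z \<tau>
      using in_S[of \<tau> z] first that \<open>snd q \<le> tb\<close> by force
  qed
qed

lemma DERIV_nonpos_at_first_zero:
  fixes g :: "real \<Rightarrow> real"
  assumes "(g has_real_derivative D) (at t)" "t0 < t" "g t = 0"
    and "\<And>\<tau>. t0 \<le> \<tau> \<Longrightarrow> \<tau> < t \<Longrightarrow> 0 < g \<tau>"
  shows "D \<le> 0"
proof (rule ccontr)
  assume "\<not> D \<le> 0"
  then obtain d where "0 < d" and dec: "\<And>h. 0 < h \<Longrightarrow> h < d \<Longrightarrow> g (t - h) < g t"
    using DERIV_pos_inc_left[OF assms(1)] by force
  define h where "h = min (d / 2) (t - t0)"
  have "0 < h" "h < d" "t0 \<le> t - h" using \<open>0 < d\<close> assms(2) by (auto simp: h_def)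
  then show False using dec assms(3) assms(4)[of "t - h"] by force
qed

lemma periodic_first_zero:
  fixes v vt :: "real \<Rightarrow> real \<Rightarrow> real"
  assumes "0 < p"
    and cont: "continuous_on ({0..p} \<times> {ta..tb}) (\<lambda>q. v (fst q) (snd q))"
    and per: "\<And>z t. ta \<le> t \<Longrightarrow> t \<le> tb \<Longrightarrow> v (z + p) t = v z t"
    and init: "\<And>z. 0 < v z ta"
    and vt: "\<And>z t. ta < t \<Longrightarrow> t \<le> tb \<Longrightarrow> ((\<lambda>\<tau>. v z \<tau>) has_real_derivative vt z t) (at t)"
    and nonpos: "v z1 s1 \<le> 0" "ta \<le> s1" "s1 \<le> tb"
  obtains zs ts where "zs \<in> {0..p}" "ta < ts" "ts \<le> tb" "v zs ts = 0" "\<And>z. 0 \<le> v z ts"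
    "vt zs ts \<le> 0"
proof -
  obtain zs ts where "zs \<in> {0..p}" and ts: "ta \<le> ts" "ts \<le> tb" "v zs ts \<le> 0"
    and before: "\<And>z \<tau>. ta \<le> \<tau> \<Longrightarrow> \<tau> < ts \<Longrightarrow> 0 < v z \<tau>"
    using periodic_first_nonpos_time[OF assms(1) cont per nonpos] by metis
  have "ts \<noteq> ta"
  proof
    assume "ts = ta"
    with ts(3) init[of zs] show False by simp
  qed
  with ts(1) have "ta < ts" by simp
  have nonneg: "0 \<le> v z ts" for z
  proof (rule tendsto_lowerbound)
    have "isCont (\<lambda>\<tau>. v z \<tau>) ts" using DERIV_isCont[OF vt[OF \<open>ta < ts\<close> ts(2)]] .
    then show "((\<lambda>\<tau>. v z \<tau>) \<longlongrightarrow> v z ts) (at_left ts)"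
      unfolding isCont_def by (rule tendsto_within_subset) simp
    show "\<forall>\<^sub>F \<tau> in at_left ts. 0 \<le> v z \<tau>"
      using eventually_at_left_real[OF \<open>ta < ts\<close>]
      by eventually_elim (metis before greaterThanLessThan_iff less_imp_le)
  qed simp
  have "v zs ts = 0" using ts(3) nonneg[of zs] by simp
  then have "vt zs ts \<le> 0"
    by (rule DERIV_nonpos_at_first_zero[OF vt[OF \<open>ta < ts\<close> ts(2)] \<open>ta < ts\<close>]) (rule before)
  show thesis
    by (rule that[OF \<open>zs \<in> {0..p}\<close> \<open>ta < ts\<close> ts(2) \<open>v zs ts = 0\<close> nonneg \<open>vt zs ts \<le> 0\<close>])
qed

lemma periodic_min_principle:
  fixes g gt :: "real \<Rightarrow> real \<Rightarrow> real"
  assumes "0 < p" "0 < L" "ta \<le> tb"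
    and cont: "continuous_on ({0..p} \<times> {ta..tb}) (\<lambda>q. g (fst q) (snd q))"
    and per: "\<And>z t. ta \<le> t \<Longrightarrow> t \<le> tb \<Longrightarrow> g (z + p) t = g z t"
    and init: "\<And>z. 0 \<le> g z ta"
    and gt: "\<And>z t. ta < t \<Longrightarrow> t \<le> tb \<Longrightarrow> ((\<lambda>\<tau>. g z \<tau>) has_real_derivative gt z t) (at t)"
    and at_min: "\<And>z t. z \<in> {0..p} \<Longrightarrow> ta < t \<Longrightarrow> t \<le> tb \<Longrightarrow> g z t < 0 \<Longrightarrow>
      (\<And>w. g z t \<le> g w t) \<Longrightarrow> L * g z t \<le> gt z t"
  shows "0 \<le> g z tb"
proof (rule ccontr)
  assume "\<not> 0 \<le> g z tb"
  define \<epsilon> where "\<epsilon> = - g z tb / (2 * exp (2 * L * (tb - ta)))"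
  have "0 < \<epsilon>" using \<open>\<not> 0 \<le> g z tb\<close> by (simp add: \<epsilon>_def divide_neg_pos)
  (* The weight grows at rate 2 L, faster than the rate L at which a negative minimum of g may
     decrease, so v cannot reach 0 from above. *)
  define v where "v w \<tau> = g w \<tau> + \<epsilon> * exp (2 * L * (\<tau> - ta))" for w \<tau>
  have v_cont: "continuous_on ({0..p} \<times> {ta..tb}) (\<lambda>q. v (fst q) (snd q))"
    unfolding v_def by (intro continuous_intros cont)
  have v_per: "v (w + p) \<tau> = v w \<tau>" if "ta \<le> \<tau>" "\<tau> \<le> tb" for w \<tau>
    using per[OF that] by (simp add: v_def)
  have v_init: "0 < v w ta" for w
    using init[of w] \<open>0 < \<epsilon>\<close> by (simp add: v_def)
  have v_deriv: "((\<lambda>\<tau>. v w \<tau>) has_real_derivative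
      gt w \<tau> + 2 * L * (\<epsilon> * exp (2 * L * (\<tau> - ta)))) (at \<tau>)"
    if "ta < \<tau>" "\<tau> \<le> tb" for w \<tau>
    unfolding v_def by (auto intro!: derivative_eq_intros gt[OF that])
  have "v z tb \<le> 0"
    using \<open>\<not> 0 \<le> g z tb\<close> by (simp add: v_def \<epsilon>_def)
  obtain zs ts where "zs \<in> {0..p}" and ts: "ta < ts" "ts \<le> tb" "v zs ts = 0" "\<And>w. 0 \<le> v w ts"
    and v_dec: "gt zs ts + 2 * L * (\<epsilon> * exp (2 * L * (ts - ta))) \<le> 0"
    by (rule periodic_first_zero[OF \<open>0 < p\<close> v_cont v_per v_init v_deriv \<open>v z tb \<le> 0\<close>
          \<open>ta \<le> tb\<close> order_refl]) iprover+
  define E where "E = \<epsilon> * exp (2 * L * (ts - ta))"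
  have "0 < E" using \<open>0 < \<epsilon>\<close> by (simp add: E_def)
  have "g zs ts = - E" using ts(3) by (simp add: v_def E_def)
  moreover have "g zs ts \<le> g w ts" for w
    using ts(3) ts(4)[of w] by (simp add: v_def)
  ultimately have "- (L * E) \<le> gt zs ts"
    using at_min[OF \<open>zs \<in> {0..p}\<close> ts(1,2)] \<open>0 < E\<close> by simp
  moreover have "0 < L * E" using \<open>0 < E\<close> \<open>0 < L\<close> by simp
  ultimately show False
    using v_dec unfolding E_def[symmetric] by linarith
qed

lemma DERIV_global_min_second_order:
  fixes f f' :: "real \<Rightarrow> real"
  assumes f': "\<And>w. (f has_real_derivative f' w) (at w)"
    and f'': "(f' has_real_derivative f'') (at z)"
    and min: "\<And>w. f z \<le> f w"
  shows "f' z = 0" and "0 \<le> f''"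
proof -
  show "f' z = 0"
    using DERIV_local_min[OF f'[of z], of 1] min by auto
  show "0 \<le> f''"
  proof (rule ccontr)
    assume "\<not> 0 \<le> f''"
    then obtain d where "0 < d" and dec: "\<And>h. 0 < h \<Longrightarrow> h < d \<Longrightarrow> f' (z + h) < f' z"
      using DERIV_neg_dec_right[OF f''] by force
    obtain \<xi> where "z < \<xi>" "\<xi> < z + d / 2" and mvt: "f (z + d / 2) - f z = (d / 2) * f' \<xi>"
      using MVT2[of z "z + d / 2" f f'] \<open>0 < d\<close> f' by auto
    have "f' \<xi> < 0"
      using dec[of "\<xi> - z"] \<open>z < \<xi>\<close> \<open>\<xi> < z + d / 2\<close> \<open>f' z = 0\<close> by auto
    with \<open>0 < d\<close> have "(d / 2) * f' \<xi> < 0" by (simp add: mult_pos_neg)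
    with mvt have "f (z + d / 2) < f z" by linarith
    with min[of "z + d / 2"] show False by simp
  qed
qed

lemma smooth_upto_derivatives:
  assumes "smooth_upto T f"
  shows "continuous_on (UNIV \<times> {0..<T}) (\<lambda>q. f (fst q) (snd q))"
    and "continuous_on (UNIV \<times> {0..<T}) (\<lambda>q. deriv (\<lambda>w. f w (snd q)) (fst q))"
    and "\<And>z t. 0 \<le> t \<Longrightarrow> t < T \<Longrightarrow>
           ((\<lambda>w. f w t) has_real_derivative deriv (\<lambda>w. f w t) z) (at z)"
    and "\<And>z t. 0 \<le> t \<Longrightarrow> t < T \<Longrightarrow>
           (deriv (\<lambda>w. f w t) has_real_derivative deriv (deriv (\<lambda>w. f w t)) z) (at z)"
    and "\<And>z t. 0 < t \<Longrightarrow> t < T \<Longrightarrow> ((\<lambda>\<tau>. f z \<tau>) has_real_derivative tder f z t) (at t)"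
proof -
  obtain U G where U: "open U" "UNIV \<times> {0..<T} \<subseteq> U" "smooth_on2 U G"
    and G: "\<And>z t. 0 \<le> t \<Longrightarrow> t < T \<Longrightarrow> G (z, t) = f z t"
    using assms unfolding smooth_upto_def by blast
  have "Ck_on (Suc (Suc 0)) U G" using U(3) unfolding smooth_on2_def by blast
  then obtain Gz Gt where "continuous_on U G"
    and Gz: "\<forall>q\<in>U. ((\<lambda>x. G (x, snd q)) has_real_derivative Gz q) (at (fst q))"
    and Gt: "\<forall>q\<in>U. ((\<lambda>y. G (fst q, y)) has_real_derivative Gt q) (at (snd q))"
    and "Ck_on (Suc 0) U Gz"
    by auto
  then obtain Gzz where "continuous_on U Gz"
    and Gzz: "\<forall>q\<in>U. ((\<lambda>x. Gz (x, snd q)) has_real_derivative Gzz q) (at (fst q))"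
    by auto
  have inU: "(z, t) \<in> U" if "0 \<le> t" "t < T" for z t
    using U(2) that by auto
  have fz: "((\<lambda>w. f w t) has_real_derivative Gz (z, t)) (at z)" if "0 \<le> t" "t < T" for z t
  proof -
    have "(\<lambda>x. G (x, t)) = (\<lambda>x. f x t)" using G that by auto
    then show ?thesis using Gz inU[OF that] by force
  qed
  have deriv_fz: "deriv (\<lambda>w. f w t) = (\<lambda>z. Gz (z, t))" if "0 \<le> t" "t < T" for t
    using DERIV_imp_deriv[OF fz[OF that]] by blast
  show "continuous_on (UNIV \<times> {0..<T}) (\<lambda>q. f (fst q) (snd q))"
    by (rule continuous_on_eq[OF continuous_on_subset[OF \<open>continuous_on U G\<close> U(2)]])
       (auto simp: G)
  show "continuous_on (UNIV \<times> {0..<T}) (\<lambda>q. deriv (\<lambda>w. f w (snd q)) (fst q))"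
    by (rule continuous_on_eq[OF continuous_on_subset[OF \<open>continuous_on U Gz\<close> U(2)]])
       (auto simp: deriv_fz)
  show "((\<lambda>w. f w t) has_real_derivative deriv (\<lambda>w. f w t) z) (at z)" if "0 \<le> t" "t < T" for z t
    using fz[OF that] deriv_fz[OF that] by simp
  show "(deriv (\<lambda>w. f w t) has_real_derivative deriv (deriv (\<lambda>w. f w t)) z) (at z)"
    if "0 \<le> t" "t < T" for z t
  proof -
    have "((\<lambda>w. Gz (w, t)) has_real_derivative Gzz (z, t)) (at z)" using Gzz inU[OF that] by force
    then show ?thesis by (simp add: deriv_fz[OF that] DERIV_imp_deriv)
  qed
  show "((\<lambda>\<tau>. f z \<tau>) has_real_derivative tder f z t) (at t)" if "0 < t" "t < T" for z t
  proof -
    have "(z, t) \<in> U" using inU that by simp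
    then have "((\<lambda>y. G (z, y)) has_real_derivative Gt (z, t)) (at t)" using Gt by force
    then have "((\<lambda>\<tau>. f z \<tau>) has_real_derivative Gt (z, t)) (at t)"
      by (rule has_field_derivative_transform_within_open[where S = "{0<..<T}"])
         (use that G in auto)
    then show ?thesis by (simp add: tder_def DERIV_imp_deriv)
  qed
qed

lemma sder_eq:
  assumes "((\<lambda>w. f w t) has_real_derivative f') (at z)"
  shows "sder \<phi> f z t = f' / \<phi> z t"
  using DERIV_imp_deriv[OF assms] by (simp add: sder_def)

lemma sder_sder_eq:
  assumes f': "\<And>w. ((\<lambda>w. f w t) has_real_derivative f' w) (at w)"
    and f'': "(f' has_real_derivative f'') (at z)"
    and \<phi>': "((\<lambda>w. \<phi> w t) has_real_derivative \<phi>') (at z)"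
    and "\<phi> z t \<noteq> 0"
  shows "sder \<phi> (sder \<phi> f) z t = (f'' * \<phi> z t - f' z * \<phi>') / \<phi> z t ^ 3"
proof -
  have "(\<lambda>w. sder \<phi> f w t) = (\<lambda>w. f' w / \<phi> w t)"
    using sder_eq[where f = f and t = t, OF f'] by blast
  moreover have "((\<lambda>w. f' w / \<phi> w t) has_real_derivative
      (f'' * \<phi> z t - f' z * \<phi>') / (\<phi> z t * \<phi> z t)) (at z)"
    by (rule DERIV_divide[OF f'' \<phi>' assms(4)])
  ultimately have "deriv (\<lambda>w. sder \<phi> f w t) z = (f'' * \<phi> z t - f' z * \<phi>') / (\<phi> z t * \<phi> z t)"
    using DERIV_imp_deriv by simp
  then show ?thesis
    using assms(4) unfolding sder_def[of \<phi> "sder \<phi> f"] by (simp add: power3_eq_cube)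
qed

lemma sder_at_spatial_min:
  assumes f': "\<And>w. ((\<lambda>w. f w t) has_real_derivative f' w) (at w)"
    and f'': "(f' has_real_derivative f'') (at z)"
    and \<phi>': "((\<lambda>w. \<phi> w t) has_real_derivative \<phi>') (at z)"
    and "0 < \<phi> z t"
    and min: "\<And>w. f z t \<le> f w t"
  shows "sder \<phi> f z t = 0" and "0 \<le> sder \<phi> (sder \<phi> f) z t"
proof -
  have "f' z = 0" "0 \<le> f''"
    using DERIV_global_min_second_order[of "\<lambda>w. f w t", OF f' f'' min] by auto
  then show "sder \<phi> f z t = 0" "0 \<le> sder \<phi> (sder \<phi> f) z t"
    using sder_eq[where f = f and t = t, OF f']
      sder_sder_eq[where f = f and t = t and \<phi> = \<phi>, OF f' f'' \<phi>'] \<open>0 < \<phi> z t\<close>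
    by simp_all
qed

lemma sder_at_spatial_min_of_difference:
  assumes x': "\<And>w. ((\<lambda>w. x w t) has_real_derivative x' w) (at w)"
    and x'': "(x' has_real_derivative x'') (at z)"
    and y': "\<And>w. ((\<lambda>w. y w t) has_real_derivative y' w) (at w)"
    and y'': "(y' has_real_derivative y'') (at z)"
    and \<phi>': "((\<lambda>w. \<phi> w t) has_real_derivative \<phi>') (at z)"
    and "0 < \<phi> z t"
    and min: "\<And>w. y z t - x z t \<le> y w t - x w t"
  shows "sder \<phi> x z t = sder \<phi> y z t"
    and "sder \<phi> (sder \<phi> x) z t \<le> sder \<phi> (sder \<phi> y) z t"
proof -
  have "y' z - x' z = 0" "0 \<le> y'' - x''"
    using DERIV_global_min_second_order[of "\<lambda>w. y w t - x w t" "\<lambda>w. y' w - x' w",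
        OF DERIV_diff[OF y' x'] DERIV_diff[OF y'' x''] min] by auto
  moreover have "0 < \<phi> z t ^ 3" using \<open>0 < \<phi> z t\<close> by simp
  ultimately show "sder \<phi> x z t = sder \<phi> y z t"
    and "sder \<phi> (sder \<phi> x) z t \<le> sder \<phi> (sder \<phi> y) z t"
    using sder_eq[where f = x and t = t, OF x'] sder_eq[where f = y and t = t, OF y']
      sder_sder_eq[where f = x and t = t and \<phi> = \<phi>, OF x' x'' \<phi>']
      sder_sder_eq[where f = y and t = t and \<phi> = \<phi>, OF y' y'' \<phi>'] \<open>0 < \<phi> z t\<close>
    by (auto intro!: divide_right_mono mult_right_mono)
qed

definition warping_rhs ::
  "(real \<Rightarrow> real \<Rightarrow> real) \<Rightarrow> (real \<Rightarrow> real \<Rightarrow> real) \<Rightarrow> (real \<Rightarrow> real \<Rightarrow> real)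
     \<Rightarrow> (real \<Rightarrow> real \<Rightarrow> real) \<Rightarrow> real \<Rightarrow> real \<Rightarrow> real" where
  "warping_rhs \<phi> x y u z t =
     sder \<phi> (sder \<phi> x) z t + sder \<phi> x z t * (sder \<phi> y z t / y z t + sder \<phi> u z t / u z t)
     + 2 * ((y z t ^ 2 - u z t ^ 2) ^ 2 - x z t ^ 4) / (x z t * y z t ^ 2 * u z t ^ 2)"

definition gap_coeff :: "real \<Rightarrow> real \<Rightarrow> real \<Rightarrow> real \<Rightarrow> real" where
  "gap_coeff q x y u =
     q\<^sup>2 / (x * y) + 2 * (u ^ 4 + 2 * x * y * u\<^sup>2 - (x + y)\<^sup>2 * (x\<^sup>2 + y\<^sup>2)) / (x\<^sup>2 * y\<^sup>2 * u\<^sup>2)"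

lemma reaction_gap:
  fixes x y u :: real
  assumes "0 < x" "0 < y" "0 < u"
  shows "2 * ((u\<^sup>2 - x\<^sup>2)\<^sup>2 - y ^ 4) / (y * u\<^sup>2 * x\<^sup>2) - 2 * ((y\<^sup>2 - u\<^sup>2)\<^sup>2 - x ^ 4) / (x * y\<^sup>2 * u\<^sup>2)
    = (y - x) * (2 * (u ^ 4 + 2 * x * y * u\<^sup>2 - (x + y)\<^sup>2 * (x\<^sup>2 + y\<^sup>2)) / (x\<^sup>2 * y\<^sup>2 * u\<^sup>2))"
  using assms by (simp add: field_simps) algebra

lemma warping_rhs_gap:
  assumes "sder \<phi> x z t = sder \<phi> y z t" and "0 < x z t" "0 < y z t" "0 < u z t"
  shows "warping_rhs \<phi> y u x z t - warping_rhs \<phi> x y u z t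
    = sder \<phi> (sder \<phi> y) z t - sder \<phi> (sder \<phi> x) z t
      + (y z t - x z t) * gap_coeff (sder \<phi> x z t) (x z t) (y z t) (u z t)"
proof -
  have transport: "sder \<phi> x z t * (sder \<phi> u z t / u z t + sder \<phi> x z t / x z t)
      - sder \<phi> x z t * (sder \<phi> x z t / y z t + sder \<phi> u z t / u z t)
    = (y z t - x z t) * ((sder \<phi> x z t)\<^sup>2 / (x z t * y z t))"
    using assms(2,3) by (simp add: field_simps power2_eq_square)
  show ?thesis
    using reaction_gap[OF assms(2-4)] transport assms(1)
    unfolding warping_rhs_def gap_coeff_def by (simp add: algebra_simps add_divide_distrib)
qed

lemma reaction_lower_bound:
  fixes x y u :: real
  assumes "0 < x" "x \<le> y" "y \<le> u"
  shows "- 2 / x \<le> 2 * ((y\<^sup>2 - u\<^sup>2)\<^sup>2 - x ^ 4) / (x * y\<^sup>2 * u\<^sup>2)"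
proof -
  have "x\<^sup>2 * x\<^sup>2 \<le> y\<^sup>2 * u\<^sup>2"
    using assms by (intro mult_mono power_mono) auto
  moreover have "x ^ 4 = x\<^sup>2 * x\<^sup>2" by (simp add: power4_eq_xxxx power2_eq_square)
  ultimately have "2 * - (y\<^sup>2 * u\<^sup>2) \<le> 2 * ((y\<^sup>2 - u\<^sup>2)\<^sup>2 - x ^ 4)"
    using zero_le_power2[of "y\<^sup>2 - u\<^sup>2"] by argo
  moreover have "0 < x * y\<^sup>2 * u\<^sup>2" using assms by simp
  ultimately have "2 * - (y\<^sup>2 * u\<^sup>2) / (x * y\<^sup>2 * u\<^sup>2) \<le> 2 * ((y\<^sup>2 - u\<^sup>2)\<^sup>2 - x ^ 4) / (x * y\<^sup>2 * u\<^sup>2)"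
    by (intro divide_right_mono) auto
  moreover have "2 * - (y\<^sup>2 * u\<^sup>2) / (x * y\<^sup>2 * u\<^sup>2) = - 2 / x" using assms by simp
  ultimately show ?thesis by simp
qed

lemma tder_gap_at_spatial_min:
  assumes smooth: "smooth_upto T \<phi>" "smooth_upto T x" "smooth_upto T y"
    and t: "0 \<le> t" "t < T"
    and pos: "0 < \<phi> z t" "0 < x z t" "0 < y z t" "0 < u z t"
    and flow: "tder x z t = warping_rhs \<phi> x y u z t" "tder y z t = warping_rhs \<phi> y u x z t"
    and min: "\<And>w. y z t - x z t \<le> y w t - x w t"
  shows "(y z t - x z t) * gap_coeff (sder \<phi> x z t) (x z t) (y z t) (u z t)
    \<le> tder y z t - tder x z t"
proof -
  note P = smooth_upto_derivatives[OF smooth(1)]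
    and X = smooth_upto_derivatives[OF smooth(2)]
    and Y = smooth_upto_derivatives[OF smooth(3)]
  have "sder \<phi> x z t = sder \<phi> y z t"
    and "sder \<phi> (sder \<phi> x) z t \<le> sder \<phi> (sder \<phi> y) z t"
    using sder_at_spatial_min_of_difference[where x = x and y = y and \<phi> = \<phi> and t = t,
        OF X(3)[OF t] X(4)[OF t] Y(3)[OF t] Y(4)[OF t]
        P(3)[OF t] pos(1) min] by auto
  with warping_rhs_gap[where \<phi> = \<phi> and x = x and y = y and u = u, OF _ pos(2-4)] flow
  show ?thesis by simp
qed

lemma gap_coeff_bounded:
  assumes smooth: "smooth_upto T \<phi>" "smooth_upto T x" "smooth_upto T y" "smooth_upto T u"
    and pos: "\<And>z t. 0 \<le> t \<Longrightarrow> t < T \<Longrightarrow> 0 < \<phi> z t \<and> 0 < x z t \<and> 0 < y z t \<and> 0 < u z t"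
    and B: "compact B" "B \<subseteq> UNIV \<times> {0..<T}"
  obtains L where "0 < L"
    "\<And>z t. (z, t) \<in> B \<Longrightarrow> gap_coeff (sder \<phi> x z t) (x z t) (y z t) (u z t) \<le> L"
proof -
  note P = smooth_upto_derivatives[OF smooth(1)]
    and X = smooth_upto_derivatives[OF smooth(2)]
    and Y = smooth_upto_derivatives[OF smooth(3)]
    and U = smooth_upto_derivatives[OF smooth(4)]
  have pos_B: "0 < \<phi> (fst q) (snd q) \<and> 0 < x (fst q) (snd q) \<and> 0 < y (fst q) (snd q)
      \<and> 0 < u (fst q) (snd q)" if "q \<in> B" for q
    using pos that B(2) by auto
  define K where "K = (\<lambda>q. gap_coeff (sder \<phi> x (fst q) (snd q))
      (x (fst q) (snd q)) (y (fst q) (snd q)) (u (fst q) (snd q)))"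
  have "continuous_on B K"
    unfolding K_def gap_coeff_def sder_def
    by (intro continuous_intros continuous_on_subset[OF P(1) B(2)] continuous_on_subset[OF X(1) B(2)]
        continuous_on_subset[OF X(2) B(2)] continuous_on_subset[OF Y(1) B(2)]
        continuous_on_subset[OF U(1) B(2)])
       (auto dest!: pos_B)
  then have "bdd_above (K ` B)"
    by (intro bounded_imp_bdd_above compact_imp_bounded compact_continuous_image B(1))
  then obtain M where "\<And>q. q \<in> B \<Longrightarrow> K q \<le> M"
    by (auto simp: bdd_above_def)
  then show thesis
    by (intro that[of "max 1 M"]) (force simp: K_def le_max_iff_disj)+
qed

lemma warping_order_preserved:
  fixes \<phi> x y u :: "real \<Rightarrow> real \<Rightarrow> real"
  assumes smooth: "smooth_upto T \<phi>" "smooth_upto T x" "smooth_upto T y" "smooth_upto T u"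
    and pos: "\<And>z t. 0 \<le> t \<Longrightarrow> t < T \<Longrightarrow> 0 < \<phi> z t \<and> 0 < x z t \<and> 0 < y z t \<and> 0 < u z t"
    and "0 < p"
    and per: "\<And>z t. 0 \<le> t \<Longrightarrow> t < T \<Longrightarrow> x (z + p) t = x z t \<and> y (z + p) t = y z t"
    and flow: "\<And>z t. 0 < t \<Longrightarrow> t < T \<Longrightarrow>
      tder x z t = warping_rhs \<phi> x y u z t \<and> tder y z t = warping_rhs \<phi> y u x z t"
    and init: "\<And>z. x z 0 \<le> y z 0"
    and s: "0 \<le> s" "s < T"
  shows "x z s \<le> y z s"
proof -
  note X = smooth_upto_derivatives[OF smooth(2)]
    and Y = smooth_upto_derivatives[OF smooth(3)]
  have B: "compact ({0..p} \<times> {0..s})" "{0..p} \<times> {0..s} \<subseteq> UNIV \<times> {0..<T}"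
    using s by (auto intro: compact_Times)
  obtain L where "0 < L" and K_le: "\<And>w \<tau>. (w, \<tau>) \<in> {0..p} \<times> {0..s} \<Longrightarrow>
      gap_coeff (sder \<phi> x w \<tau>) (x w \<tau>) (y w \<tau>) (u w \<tau>) \<le> L"
    using gap_coeff_bounded[OF smooth pos B] by metis
  have "0 \<le> y z s - x z s"
  proof (rule periodic_min_principle[where g = "\<lambda>z t. y z t - x z t"
        and gt = "\<lambda>z t. tder y z t - tder x z t", OF \<open>0 < p\<close> \<open>0 < L\<close> s(1)])
    show "continuous_on ({0..p} \<times> {0..s}) (\<lambda>q. y (fst q) (snd q) - x (fst q) (snd q))"
      using continuous_on_subset[OF X(1) B(2)] continuous_on_subset[OF Y(1) B(2)]
      by (intro continuous_intros)
    show "y (w + p) \<tau> - x (w + p) \<tau> = y w \<tau> - x w \<tau>" if "0 \<le> \<tau>" "\<tau> \<le> s" for w \<tau>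
      using per[of \<tau> w] that s by simp
    show "0 \<le> y w 0 - x w 0" for w
      using init[of w] by simp
    show "((\<lambda>\<tau>. y w \<tau> - x w \<tau>) has_real_derivative tder y w \<tau> - tder x w \<tau>) (at \<tau>)"
      if "0 < \<tau>" "\<tau> \<le> s" for w \<tau>
      using that s by (intro DERIV_diff X(5) Y(5)) auto
    show "L * (y w \<tau> - x w \<tau>) \<le> tder y w \<tau> - tder x w \<tau>"
      if "w \<in> {0..p}" "0 < \<tau>" "\<tau> \<le> s" and neg: "y w \<tau> - x w \<tau> < 0"
        and min: "\<And>w'. y w \<tau> - x w \<tau> \<le> y w' \<tau> - x w' \<tau>" for w \<tau>
    proof -
      have "0 \<le> \<tau>" "\<tau> < T" using that s by auto
      have "L * (y w \<tau> - x w \<tau>)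
          \<le> (y w \<tau> - x w \<tau>) * gap_coeff (sder \<phi> x w \<tau>) (x w \<tau>) (y w \<tau>) (u w \<tau>)"
        using K_le[of w \<tau>] that neg by (simp add: mult.commute mult_left_mono_neg)
      also have "\<dots> \<le> tder y w \<tau> - tder x w \<tau>"
        using pos[OF \<open>0 \<le> \<tau>\<close> \<open>\<tau> < T\<close>, of w] flow[OF \<open>0 < \<tau>\<close> \<open>\<tau> < T\<close>, of w] min
        by (intro tder_gap_at_spatial_min[OF smooth(1-3) \<open>0 \<le> \<tau>\<close> \<open>\<tau> < T\<close>]) auto
      finally show ?thesis .
    qed
  qed
  then show ?thesis by simp
qed

lemma RF_S1S3_D:
  assumes "RF_S1S3 T \<phi> a b c"
  shows "smooth_upto T \<phi>" "smooth_upto T a" "smooth_upto T b" "smooth_upto T c"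
    and "\<And>z t. 0 \<le> t \<Longrightarrow> t < T \<Longrightarrow> 0 < \<phi> z t \<and> 0 < a z t \<and> 0 < b z t \<and> 0 < c z t"
    and "\<And>z t. 0 \<le> t \<Longrightarrow> t < T \<Longrightarrow>
           a (z + 2 * pi) t = a z t \<and> b (z + 2 * pi) t = b z t \<and> c (z + 2 * pi) t = c z t"
    and "\<And>z t. 0 < t \<Longrightarrow> t < T \<Longrightarrow>
           tder a z t = warping_rhs \<phi> a b c z t \<and> tder b z t = warping_rhs \<phi> b c a z t
           \<and> tder c z t = warping_rhs \<phi> c a b z t"
  using assms unfolding RF_S1S3_def ricci_flow_eqs_def warping_rhs_def by auto

lemma RF_S1S3_axes_ordered:
  assumes RF: "RF_S1S3 T \<phi> a b c"
    and init: "\<And>z. a z 0 \<le> b z 0 \<and> b z 0 \<le> c z 0"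
    and t: "0 \<le> t" "t < T"
  shows "a z t \<le> b z t \<and> b z t \<le> c z t"
proof
  note D = RF_S1S3_D[OF RF]
  show "a z t \<le> b z t"
    by (rule warping_order_preserved[of T \<phi> a b c "2 * pi"]) (use D init t in auto)
  show "b z t \<le> c z t"
    by (rule warping_order_preserved[of T \<phi> b c a "2 * pi"]) (use D init t in auto)
qed

lemma RF_S1S3_smallest_axis_at_spatial_min:
  assumes RF: "RF_S1S3 T \<phi> a b c" and t: "0 < t" "t < T"
    and ordered: "a z t \<le> b z t" "b z t \<le> c z t"
    and min: "\<And>w. a z t \<le> a w t"
  shows "- 2 \<le> a z t * tder a z t"
proof -
  note D = RF_S1S3_D[OF RF]
  have "0 \<le> t" using t(1) by simp
  have pos: "0 < \<phi> z t" "0 < a z t" using D(5)[OF \<open>0 \<le> t\<close> t(2)] by auto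
  note P = smooth_upto_derivatives[OF D(1)] and A = smooth_upto_derivatives[OF D(2)]
  have "sder \<phi> a z t = 0" "0 \<le> sder \<phi> (sder \<phi> a) z t"
    using sder_at_spatial_min[where f = a and \<phi> = \<phi> and t = t,
        OF A(3)[OF \<open>0 \<le> t\<close> t(2)] A(4)[OF \<open>0 \<le> t\<close> t(2)] P(3)[OF \<open>0 \<le> t\<close> t(2)] pos(1) min]
    by auto
  then have "2 * ((b z t ^ 2 - c z t ^ 2) ^ 2 - a z t ^ 4) / (a z t * b z t ^ 2 * c z t ^ 2)
      \<le> tder a z t"
    using D(7)[OF t] unfolding warping_rhs_def by simp
  with reaction_lower_bound[OF pos(2) ordered] have "- 2 / a z t \<le> tder a z t"
    by linarith
  with pos(2) have "- 2 \<le> tder a z t * a z t" by (simp add: field_simps)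
  then show ?thesis by (simp add: mult.commute)
qed

lemma RF_S1S3_smallest_axis_barrier:
  assumes RF: "RF_S1S3 T \<phi> a b c"
    and ordered: "\<And>z t. 0 \<le> t \<Longrightarrow> t < T \<Longrightarrow> a z t \<le> b z t \<and> b z t \<le> c z t"
    and t: "0 \<le> t" "t \<le> s" "s < T"
    and m: "0 \<le> m" "\<And>z. m \<le> a z t"
  shows "m\<^sup>2 - 4 * (s - t) \<le> (a z s)\<^sup>2"
proof -
  note D = RF_S1S3_D[OF RF]
  note A = smooth_upto_derivatives[OF D(2)]
  have "0 \<le> (a z s)\<^sup>2 - m\<^sup>2 + 4 * (s - t)"
  proof (rule periodic_min_principle[where g = "\<lambda>z \<tau>. (a z \<tau>)\<^sup>2 - m\<^sup>2 + 4 * (\<tau> - t)"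
        and gt = "\<lambda>z \<tau>. 2 * a z \<tau> * tder a z \<tau> + 4" and L = 1, OF _ zero_less_one t(2)])
    show "0 < 2 * pi" by simp
    show "continuous_on ({0..2 * pi} \<times> {t..s})
        (\<lambda>q. (a (fst q) (snd q))\<^sup>2 - m\<^sup>2 + 4 * (snd q - t))"
      using t by (intro continuous_intros continuous_on_subset[OF A(1)]) auto
    show "(a (w + 2 * pi) \<tau>)\<^sup>2 - m\<^sup>2 + 4 * (\<tau> - t) = (a w \<tau>)\<^sup>2 - m\<^sup>2 + 4 * (\<tau> - t)"
      if "t \<le> \<tau>" "\<tau> \<le> s" for w \<tau>
      using D(6)[of \<tau> w] that t by simp
    show "0 \<le> (a w t)\<^sup>2 - m\<^sup>2 + 4 * (t - t)" for w
      using m power_mono[of m "a w t" 2] by simp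
    show "((\<lambda>\<tau>. (a w \<tau>)\<^sup>2 - m\<^sup>2 + 4 * (\<tau> - t)) has_real_derivative 2 * a w \<tau> * tder a w \<tau> + 4)
        (at \<tau>)" if "t < \<tau>" "\<tau> \<le> s" for w \<tau>
      using that t by (auto intro!: derivative_eq_intros A(5))
    show "1 * ((a w \<tau>)\<^sup>2 - m\<^sup>2 + 4 * (\<tau> - t)) \<le> 2 * a w \<tau> * tder a w \<tau> + 4"
      if "t < \<tau>" "\<tau> \<le> s" and neg: "(a w \<tau>)\<^sup>2 - m\<^sup>2 + 4 * (\<tau> - t) < 0"
        and min: "\<And>w'. (a w \<tau>)\<^sup>2 - m\<^sup>2 + 4 * (\<tau> - t) \<le> (a w' \<tau>)\<^sup>2 - m\<^sup>2 + 4 * (\<tau> - t)"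
      for w \<tau>
    proof -
      have "0 < \<tau>" "\<tau> < T" using that t by auto
      have "a w \<tau> \<le> a w' \<tau>" for w'
        using min[of w'] D(5)[OF less_imp_le[OF \<open>0 < \<tau>\<close>] \<open>\<tau> < T\<close>, of w']
        by (auto intro: power2_le_imp_le)
      with ordered[OF less_imp_le[OF \<open>0 < \<tau>\<close>] \<open>\<tau> < T\<close>, of w]
      have "- 2 \<le> a w \<tau> * tder a w \<tau>"
        by (intro RF_S1S3_smallest_axis_at_spatial_min[OF RF \<open>0 < \<tau>\<close> \<open>\<tau> < T\<close>]) simp_all
      with neg show ?thesis by simp
    qed
  qed
  then show ?thesis by simp
qed

lemma le_square_INF:
  fixes f :: "'a \<Rightarrow> real"
  assumes "\<And>z. 0 \<le> f z" "\<And>z. r \<le> (f z)\<^sup>2"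
  shows "r \<le> (INF z. f z)\<^sup>2"
proof (cases "r \<le> 0")
  case True
  then show ?thesis by (meson order_trans zero_le_power2)
next
  case False
  have "sqrt r \<le> (INF z. f z)"
    using assms by (intro cINF_greatest real_le_lsqrt) auto
  then have "(sqrt r)\<^sup>2 \<le> (INF z. f z)\<^sup>2" using False by (intro power_mono) auto
  with False show ?thesis by simp
qed

lemma RF_S1S3_INF_barrier:
  assumes RF: "RF_S1S3 T \<phi> a b c"
    and ordered: "\<And>z t. 0 \<le> t \<Longrightarrow> t < T \<Longrightarrow> a z t \<le> b z t \<and> b z t \<le> c z t"
    and t: "0 \<le> t" "t \<le> s" "s < T"
  shows "(INF z. a z t)\<^sup>2 - 4 * (s - t) \<le> (INF z. a z s)\<^sup>2"
proof (rule le_square_INF)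
  have pos: "0 < a z \<tau>" if "0 \<le> \<tau>" "\<tau> < T" for z \<tau>
    using RF_S1S3_D(5)[OF RF that] by simp
  show "0 \<le> a z s" for z using pos[of s z] t by simp
  have "bdd_below (range (\<lambda>z. a z t))"
    using pos t by (intro bdd_belowI[where m = 0]) (auto intro: less_imp_le)
  then have "(INF z. a z t) \<le> a z t" for z by (rule cINF_lower) simp
  moreover have "0 \<le> (INF z. a z t)"
    using pos t by (intro cINF_greatest) (auto intro: less_imp_le)
  ultimately show "(INF z. a z t)\<^sup>2 - 4 * (s - t) \<le> (a z s)\<^sup>2" for z
    by (intro RF_S1S3_smallest_axis_barrier[OF RF ordered t])
qed

theorem lemma4p1:
  fixes T :: real and \<phi> a b c :: "real \<Rightarrow> real \<Rightarrow> real"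
  assumes "maximal_RF_S1S3 T \<phi> a b c"
    and "\<forall>z. a z 0 \<le> b z 0 \<and> b z 0 \<le> c z 0"
    and "((\<lambda>t. INF z. a z t) \<longlongrightarrow> 0) (at_left T)"
  shows "\<forall>t\<in>{0..<T}. (INF z. a z t) ^ 2 \<le> 4 * (T - t)"
proof
  fix t assume "t \<in> {0..<T}"
  then have t: "0 \<le> t" "t < T" by auto
  have RF: "RF_S1S3 T \<phi> a b c"
    using assms(1) by (simp add: maximal_RF_S1S3_def)
  have ordered: "\<And>z t. 0 \<le> t \<Longrightarrow> t < T \<Longrightarrow> a z t \<le> b z t \<and> b z t \<le> c z t"
    using RF_S1S3_axes_ordered[OF RF] assms(2) by blast
  have "((\<lambda>s. (INF z. a z s)\<^sup>2) \<longlongrightarrow> 0) (at_left T)"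
    using tendsto_power[OF assms(3), of 2] by simp
  moreover have "((\<lambda>s. (INF z. a z t)\<^sup>2 - 4 * (s - t)) \<longlongrightarrow> (INF z. a z t)\<^sup>2 - 4 * (T - t))
      (at_left T)"
    by (intro tendsto_intros)
  moreover have "\<forall>\<^sub>F s in at_left T. (INF z. a z t)\<^sup>2 - 4 * (s - t) \<le> (INF z. a z s)\<^sup>2"
    using eventually_at_left_real[OF t(2)]
    by eventually_elim (use RF_S1S3_INF_barrier[OF RF ordered t(1)] in auto)
  ultimately have "(INF z. a z t)\<^sup>2 - 4 * (T - t) \<le> 0"
    by (rule tendsto_le[OF trivial_limit_at_left_real])
  then show "(INF z. a z t) ^ 2 \<le> 4 * (T - t)" by simp
qed

end
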